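(* Let $f$ be a transcendental entire function and $f_n(z):=f(nz)/n$ for $n\in\mathbb N$. Suppose $(f_{n_k})$ is a subsequence and $Q\subset\mathbb C$ is a finite set such that $(f_{n_k})$ converges uniformly on compact subsets of $\mathbb C\setminus Q$ (with respect to the spherical metric). Then $0\in Q$, and there exists $0<s<1$ such that $f_{n_k}\to\infty$ uniformly on compact subsets of $\mathbb D_s\setminus\{0\}$.
   Context: $\mathbb D_r$ denotes the open Euclidean disk of radius $r$ centered at $0$. Convergence is locally uniform with respect to the spherical metric on $\hat{\mathbb C}$, so the limit may be $\equiv\infty$. *)

theory Defs
  imports "HOL-Complex_Analysis.Complex_Analysis"
begin

text \<open>Points of the Riemann sphere: Some z is the finite point z, None is infinity.\<close>

definition chordal :: "complex option \<Rightarrow> complex option \<Rightarrow> real" where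
  "chordal a b = (case (a, b) of
      (Some z, Some w) \<Rightarrow> 2 * cmod (z - w) / (sqrt (1 + (cmod z)\<^sup>2) * sqrt (1 + (cmod w)\<^sup>2))
    | (Some z, None) \<Rightarrow> 2 / sqrt (1 + (cmod z)\<^sup>2)
    | (None, Some w) \<Rightarrow> 2 / sqrt (1 + (cmod w)\<^sup>2)
    | (None, None) \<Rightarrow> 0)"

definition sph_unif_conv_on ::
  "(nat \<Rightarrow> complex \<Rightarrow> complex) \<Rightarrow> (complex \<Rightarrow> complex option) \<Rightarrow> complex set \<Rightarrow> bool" where
  "sph_unif_conv_on F g K \<longleftrightarrow>
     (\<forall>e>0. \<forall>\<^sub>F k in sequentially. \<forall>z\<in>K. chordal (Some (F k z)) (g z) < e)"

definition sph_loc_unif_conv_on ::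
  "(nat \<Rightarrow> complex \<Rightarrow> complex) \<Rightarrow> (complex \<Rightarrow> complex option) \<Rightarrow> complex set \<Rightarrow> bool" where
  "sph_loc_unif_conv_on F g U \<longleftrightarrow>
     (\<forall>K. compact K \<and> K \<subseteq> U \<longrightarrow> sph_unif_conv_on F g K)"

definition transcendental_entire :: "(complex \<Rightarrow> complex) \<Rightarrow> bool" where
  "transcendental_entire f \<longleftrightarrow> f holomorphic_on UNIV \<and> \<not> (\<exists>p. \<forall>z. f z = poly p z)"

definition rescale :: "(complex \<Rightarrow> complex) \<Rightarrow> nat \<Rightarrow> complex \<Rightarrow> complex" where
  "rescale f n z = f (of_nat n * z) / of_nat n"

end

theory Submission
  imports Defs
begin

text \<open>
  Write F_k for the rescalings f_{n_k}. If the F_k were uniformly bounded by M on a circle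
  |z| = t, then |f| \<le> M n_k t on the circles |z| = n_k t, and Cauchy's estimates would make
  f affine. Hence every spherical limit of the F_k on a circle around 0 takes \<infinity>
  somewhere on it. If 0 \<notin> Q, this contradicts F_k(0) = f(0)/n_k \<longlonglongrightarrow> 0 and the
  continuity of the limit at 0. On a punctured disc avoiding Q - {0} the limit is either
  identically \<infinity> or nowhere \<infinity>: where it is \<infinity>, Hurwitz's theorem applied to the zero-free
  functions 1/F_k shows that it is \<infinity> nearby. The circle argument excludes the second
  alternative.
\<close>

section \<open>The chordal metric via stereographic projection\<close>

text \<open>The Riemann sphere, embedded as the unit sphere of \<complex> \<times> \<real> with \<infinity> at the north pole;
  the chordal distance is the euclidean distance of the images.\<close>

definition stereo :: "complex option \<Rightarrow> complex \<times> real" where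
  "stereo a = (case a of
      None \<Rightarrow> (0, 1)
    | Some z \<Rightarrow> (of_real (2 / (1 + (cmod z)\<^sup>2)) * z, ((cmod z)\<^sup>2 - 1) / (1 + (cmod z)\<^sup>2)))"

lemma one_add_cmod_sq_pos: "0 < 1 + (cmod z)\<^sup>2"
  by (simp add: add_pos_nonneg)

lemma dist_stereo_Some_Some:
  "dist (stereo (Some z)) (stereo (Some w)) = chordal (Some z) (Some w)"
proof -
  define A B where "A = (cmod z)\<^sup>2" and "B = (cmod w)\<^sup>2"
  define D where "D = (1 + A) * (1 + B)"
  define V where "V = 2 * (1 + B) * z - 2 * (1 + A) * w"
  define T where "T = (A - 1) * (1 + B) - (B - 1) * (1 + A)"
  have pos: "1 + A > 0" "1 + B > 0" "D > 0"
    unfolding A_def B_def D_def by (simp_all add: one_add_cmod_sq_pos)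
  have V: "of_real (2 / (1 + A)) * z - of_real (2 / (1 + B)) * w = of_real (1 / D) * V"
    using pos by (simp add: V_def D_def complex_eq_iff field_simps)
  have T: "(A - 1) / (1 + A) - (B - 1) / (1 + B) = T / D"
    using pos by (simp add: T_def D_def field_simps)
  have key: "(cmod V)\<^sup>2 + T\<^sup>2 = 4 * (cmod (z - w))\<^sup>2 * D"
    unfolding V_def T_def D_def A_def B_def cmod_power2 by simp algebra
  have "(dist (stereo (Some z)) (stereo (Some w)))\<^sup>2
      = (cmod (of_real (2 / (1 + A)) * z - of_real (2 / (1 + B)) * w))\<^sup>2
        + ((A - 1) / (1 + A) - (B - 1) / (1 + B))\<^sup>2"
    unfolding stereo_def option.case dist_Pair_Pair A_def B_def
    by (simp add: dist_norm)
  also have "\<dots> = ((cmod V)\<^sup>2 + T\<^sup>2) / D\<^sup>2"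
    unfolding V T using pos
    by (simp add: norm_mult norm_divide power_mult_distrib power_divide add_divide_distrib)
  also have "\<dots> = (2 * cmod (z - w) / (sqrt (1 + A) * sqrt (1 + B)))\<^sup>2"
  proof -
    have "(sqrt (1 + A) * sqrt (1 + B))\<^sup>2 = D"
      using pos by (simp add: D_def power_mult_distrib)
    then show ?thesis
      unfolding key power_divide using pos by (simp add: power2_eq_square)
  qed
  finally show ?thesis
    by (simp add: chordal_def A_def B_def)
qed

lemma dist_stereo_Some_None:
  "dist (stereo (Some z)) (stereo None) = chordal (Some z) None"
proof -
  define A where "A = (cmod z)\<^sup>2"
  have pos: "1 + A > 0"
    unfolding A_def by (rule one_add_cmod_sq_pos)
  have "(dist (stereo (Some z)) (stereo None))\<^sup>2 = (2 / (1 + A))\<^sup>2 * A + ((A - 1) / (1 + A) - 1)\<^sup>2"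
    unfolding stereo_def option.case dist_Pair_Pair A_def
    unfolding dist_norm diff_zero norm_mult norm_of_real
    by (simp add: power_mult_distrib power_divide)
  also have "\<dots> = (2 / sqrt (1 + A))\<^sup>2"
    using pos by (simp add: power_divide field_simps) algebra
  finally show ?thesis
    by (simp add: chordal_def A_def)
qed

lemma chordal_eq_dist_stereo: "chordal a b = dist (stereo a) (stereo b)"
proof (cases a; cases b)
  fix z assume "a = None" "b = Some z"
  then show ?thesis
    using dist_stereo_Some_None[of z] by (simp add: chordal_def dist_commute)
qed (simp_all add: dist_stereo_Some_Some dist_stereo_Some_None chordal_def)

definition sphere_recip :: "complex option \<Rightarrow> complex option" where
  "sphere_recip a =
    (case a of None \<Rightarrow> Some 0 | Some z \<Rightarrow> if z = 0 then None else Some (inverse z))"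

text \<open>Inversion z \<mapsto> 1/z of the Riemann sphere is the reflection (x, s) \<mapsto> (cnj x, -s) of
  the embedded sphere, hence a chordal isometry.\<close>

lemma stereo_sphere_recip: "stereo (sphere_recip a) = (cnj (fst (stereo a)), - snd (stereo a))"
proof (cases a)
  case (Some z)
  show ?thesis
  proof (cases "z = 0")
    case False
    define A where "A = (cmod z)\<^sup>2"
    have A: "A > 0" "(cmod (inverse z))\<^sup>2 = inverse A"
      unfolding A_def using False by (simp_all add: norm_inverse power_inverse)
    have inv: "inverse z = of_real (inverse A) * cnj z"
      using complex_div_cnj[of 1 z] unfolding A_def by (simp add: inverse_eq_divide)
    have scale: "2 / (1 + inverse A) * inverse A = 2 / (1 + A)"
      using A(1) by (simp add: field_simps)
    have recip: "sphere_recip a = Some (inverse z)"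
      using Some False by (simp add: sphere_recip_def)
    have fst_recip: "of_real (2 / (1 + inverse A)) * inverse z = cnj (of_real (2 / (1 + A)) * z)"
      unfolding inv mult.assoc[symmetric] of_real_mult[symmetric] scale by simp
    have snd_recip: "(inverse A - 1) / (1 + inverse A) = - ((A - 1) / (1 + A))"
    proof -
      have "(inverse A - 1) / (1 + inverse A) = ((1 - A) * inverse A) / ((1 + A) * inverse A)"
        using A(1) by (simp add: algebra_simps)
      then show ?thesis
        using A(1) by (simp add: minus_divide_left)
    qed
    show ?thesis
      unfolding recip unfolding Some stereo_def option.case A(2) A_def[symmetric]
      by (simp only: fst_conv snd_conv fst_recip snd_recip)
  qed (simp add: Some sphere_recip_def stereo_def)
qed (simp add: sphere_recip_def stereo_def)

lemma chordal_sphere_recip: "chordal (sphere_recip a) (sphere_recip b) = chordal a b"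
proof -
  have "dist (cnj x) (cnj y) = dist x y" for x y :: complex
    by (simp add: dist_norm flip: complex_cnj_diff)
  moreover have "dist (- s) (- t) = dist s t" for s t :: real
    by (simp add: dist_real_def)
  ultimately have "dist (cnj x, - s) (cnj y, - t) = dist (x, s) (y, t)" for x y :: complex and s t :: real
    unfolding dist_Pair_Pair by simp
  then show ?thesis
    by (metis chordal_eq_dist_stereo stereo_sphere_recip prod.collapse)
qed

lemma continuous_on_stereo_Some:
  "continuous_on S h \<Longrightarrow> continuous_on S (\<lambda>z. stereo (Some (h z)))"
  unfolding stereo_def option.case
  by (intro continuous_intros) (auto simp: one_add_cmod_sq_pos[THEN less_imp_neq, symmetric])

lemma chordal_commute: "chordal a b = chordal b a"
  by (simp add: chordal_eq_dist_stereo dist_commute)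

lemma chordal_triangle: "chordal a c \<le> chordal a b + chordal b c"
  unfolding chordal_eq_dist_stereo by (rule dist_triangle)

lemma chordal_Some_None: "chordal (Some z) None = 2 / sqrt (1 + (cmod z)\<^sup>2)"
  by (simp add: chordal_def)

lemma stereo_eq_stereo_None_iff: "stereo a = stereo None \<longleftrightarrow> a = None"
proof -
  have "chordal (Some z) None \<noteq> 0" for z
    using one_add_cmod_sq_pos[of z] by (simp add: chordal_Some_None)
  moreover have "stereo a = stereo None \<longleftrightarrow> chordal a None = 0"
    by (simp add: chordal_eq_dist_stereo)
  ultimately show ?thesis
    by (cases a) (auto simp: chordal_def)
qed

lemma one_less_cmod_if_chordal_None_less_1:
  assumes "chordal (Some w) None < 1"
  shows "1 < cmod w"
proof -
  have "2 < sqrt (1 + (cmod w)\<^sup>2)"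
    using assms one_add_cmod_sq_pos[of w] by (simp add: chordal_Some_None field_simps)
  then have "sqrt (2\<^sup>2) < sqrt (1 + (cmod w)\<^sup>2)"
    by simp
  then have "1 < (cmod w)\<^sup>2"
    by (simp only: real_sqrt_less_iff) simp
  then show ?thesis
    by (metis not_less norm_ge_zero power_le_one)
qed

lemma cmod_less_if_chordal_None_greater:
  assumes "0 < \<eta>" "\<eta> < chordal (Some w) None"
  shows "cmod w < 2 / \<eta>"
proof -
  have "sqrt (1 + (cmod w)\<^sup>2) < 2 / \<eta>"
    using assms one_add_cmod_sq_pos[of w] by (simp add: chordal_Some_None field_simps)
  moreover have "cmod w \<le> sqrt (1 + (cmod w)\<^sup>2)"
    by (simp add: real_le_rsqrt)
  ultimately show ?thesis by linarith
qed

lemma dist_le_chordal: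
  assumes "cmod x \<le> 1" "cmod y \<le> 1"
  shows "dist x y \<le> chordal (Some x) (Some y)"
proof -
  have "sqrt (1 + (cmod u)\<^sup>2) \<le> sqrt 2" if "cmod u \<le> 1" for u
    using that by (simp add: abs_square_le_1)
  then have "sqrt (1 + (cmod x)\<^sup>2) * sqrt (1 + (cmod y)\<^sup>2) \<le> sqrt 2 * sqrt 2"
    using assms by (intro mult_mono) auto
  then have "sqrt (1 + (cmod x)\<^sup>2) * sqrt (1 + (cmod y)\<^sup>2) \<le> 2"
    by simp
  then have "cmod (x - y) * (sqrt (1 + (cmod x)\<^sup>2) * sqrt (1 + (cmod y)\<^sup>2)) \<le> 2 * cmod (x - y)"
    using mult_right_mono[OF _ norm_ge_zero[of "x - y"]] by (metis mult.commute)
  then show ?thesis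
    using one_add_cmod_sq_pos[of x] one_add_cmod_sq_pos[of y]
    by (simp add: chordal_def dist_norm pos_le_divide_eq)
qed

section \<open>Spherical limits of holomorphic functions\<close>

lemma sph_unif_conv_on_iff_uniform_limit:
  "sph_unif_conv_on F g K \<longleftrightarrow>
     uniform_limit K (\<lambda>k z. stereo (Some (F k z))) (\<lambda>z. stereo (g z)) sequentially"
  unfolding sph_unif_conv_on_def uniform_limit_iff chordal_eq_dist_stereo ..

lemma sph_unif_conv_on_shift:
  "sph_unif_conv_on F g K \<Longrightarrow> sph_unif_conv_on (\<lambda>k. F (k + m)) g K"
  unfolding sph_unif_conv_on_def
proof (intro allI impI)
  fix e :: real
  assume "\<forall>e>0. \<forall>\<^sub>F k in sequentially. \<forall>z\<in>K. chordal (Some (F k z)) (g z) < e" "e > 0"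
  then show "\<forall>\<^sub>F k in sequentially. \<forall>z\<in>K. chordal (Some (F (k + m) z)) (g z) < e"
    using eventually_sequentially_seg[of "\<lambda>k. \<forall>z\<in>K. chordal (Some (F k z)) (g z) < e" m] by blast
qed

lemma sph_loc_unif_conv_onD:
  "sph_loc_unif_conv_on F g U \<Longrightarrow> compact K \<Longrightarrow> K \<subseteq> U \<Longrightarrow> sph_unif_conv_on F g K"
  unfolding sph_loc_unif_conv_on_def by blast

lemma sph_loc_unif_conv_on_subset:
  "sph_loc_unif_conv_on F g U \<Longrightarrow> V \<subseteq> U \<Longrightarrow> sph_loc_unif_conv_on F g V"
  unfolding sph_loc_unif_conv_on_def by blast

lemma sph_loc_unif_conv_on_cong:
  "sph_loc_unif_conv_on F g U \<Longrightarrow> (\<And>z. z \<in> U \<Longrightarrow> g z = g' z) \<Longrightarrow>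
    sph_loc_unif_conv_on F g' U"
  unfolding sph_loc_unif_conv_on_def sph_unif_conv_on_def
proof (intro allI impI)
  fix K :: "complex set" and e :: real
  assume "\<forall>K. compact K \<and> K \<subseteq> U \<longrightarrow>
      (\<forall>e>0. \<forall>\<^sub>F k in sequentially. \<forall>z\<in>K. chordal (Some (F k z)) (g z) < e)"
    and eq: "\<And>z. z \<in> U \<Longrightarrow> g z = g' z" and K: "compact K \<and> K \<subseteq> U" and "e > 0"
  then have "\<forall>\<^sub>F k in sequentially. \<forall>z\<in>K. chordal (Some (F k z)) (g z) < e"
    by blast
  then show "\<forall>\<^sub>F k in sequentially. \<forall>z\<in>K. chordal (Some (F k z)) (g' z) < e"
    by (rule eventually_mono) (metis K eq subsetD)
qed

lemma continuous_on_sph_unif_limit: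
  assumes "\<And>k. continuous_on K (F k)" "sph_unif_conv_on F g K"
  shows "continuous_on K (\<lambda>z. stereo (g z))"
  using assms(2) unfolding sph_unif_conv_on_iff_uniform_limit
  by (rule uniform_limit_theorem[rotated]) (auto intro!: always_eventually continuous_on_stereo_Some assms(1))

lemma continuous_on_sph_loc_unif_limit:
  assumes U: "open U" and cont: "\<And>k. continuous_on U (F k)" and conv: "sph_loc_unif_conv_on F g U"
  shows "continuous_on U (\<lambda>z. stereo (g z))"
  unfolding continuous_on_eq_continuous_at[OF U]
proof
  fix z assume "z \<in> U"
  then obtain \<epsilon> where "\<epsilon> > 0" "cball z \<epsilon> \<subseteq> U"
    using U open_contains_cball by blast
  then have "continuous_on (cball z \<epsilon>) (\<lambda>z. stereo (g z))"
    using conv unfolding sph_loc_unif_conv_on_def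
    by (intro continuous_on_sph_unif_limit[where F = F]) (auto intro: continuous_on_subset[OF cont])
  then show "isCont (\<lambda>z. stereo (g z)) z"
    by (rule continuous_on_interior) (use \<open>\<epsilon> > 0\<close> in simp)
qed

lemma sph_unif_conv_on_finite_limit_bounded:
  assumes K: "compact K" and cont: "\<And>k. continuous_on K (F k)"
    and conv: "sph_unif_conv_on F g K" and finite: "\<And>z. z \<in> K \<Longrightarrow> g z \<noteq> None"
  shows "\<exists>M. \<forall>\<^sub>F k in sequentially. \<forall>z\<in>K. cmod (F k z) \<le> M"
proof (cases "K = {}")
  case False
  have "continuous_on K (\<lambda>z. chordal (g z) None)"
    unfolding chordal_eq_dist_stereo
    by (intro continuous_intros continuous_on_sph_unif_limit[OF cont conv])
  then obtain z0 where z0: "z0 \<in> K"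
    and min: "\<And>z. z \<in> K \<Longrightarrow> chordal (g z0) None \<le> chordal (g z) None"
    using continuous_attains_inf[OF K False] by blast
  define \<eta> where "\<eta> = chordal (g z0) None"
  have "\<eta> > 0"
    using finite[OF z0] stereo_eq_stereo_None_iff[of "g z0"]
    unfolding \<eta>_def chordal_eq_dist_stereo by simp
  have "\<forall>\<^sub>F k in sequentially. \<forall>z\<in>K. chordal (Some (F k z)) (g z) < \<eta> / 2"
    using conv half_gt_zero[OF \<open>\<eta> > 0\<close>] unfolding sph_unif_conv_on_def by blast
  then have "\<forall>\<^sub>F k in sequentially. \<forall>z\<in>K. cmod (F k z) \<le> 4 / \<eta>"
  proof (rule eventually_mono, intro ballI)
    fix k z assume close: "\<forall>z\<in>K. chordal (Some (F k z)) (g z) < \<eta> / 2" and "z \<in> K"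
    have "\<eta> \<le> chordal (g z) (Some (F k z)) + chordal (Some (F k z)) None"
      using min[OF \<open>z \<in> K\<close>] chordal_triangle unfolding \<eta>_def by (rule order_trans)
    moreover have "chordal (g z) (Some (F k z)) < \<eta> / 2"
      using close \<open>z \<in> K\<close> chordal_commute by metis
    ultimately have "\<eta> / 2 < chordal (Some (F k z)) None"
      by linarith
    then show "cmod (F k z) \<le> 4 / \<eta>"
      using cmod_less_if_chordal_None_greater[of "\<eta> / 2"] \<open>\<eta> > 0\<close> by fastforce
  qed
  then show ?thesis by blast
qed simp

lemma uniform_limit_inverse_if_sph_unif_conv:
  assumes conv: "sph_unif_conv_on F g K"
    and F_large: "\<And>k z. z \<in> K \<Longrightarrow> 1 \<le> cmod (F k z)"
    and g_large: "\<And>z b. z \<in> K \<Longrightarrow> g z = Some b \<Longrightarrow> 1 \<le> cmod b"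
  shows "uniform_limit K (\<lambda>k z. inverse (F k z))
           (\<lambda>z. case g z of None \<Rightarrow> 0 | Some b \<Rightarrow> inverse b) sequentially"
proof -
  define h where "h = (\<lambda>z. case g z of None \<Rightarrow> 0 | Some b \<Rightarrow> inverse b)"
  have h: "Some (h z) = sphere_recip (g z)" "cmod (h z) \<le> 1" if "z \<in> K" for z
    using g_large[OF that]
    by (auto simp: h_def sphere_recip_def norm_inverse inverse_le_1_iff split: option.splits)
  have F: "Some (inverse (F k z)) = sphere_recip (Some (F k z))" "cmod (inverse (F k z)) \<le> 1"
    if "z \<in> K" for k z
    using F_large[OF that, of k] by (auto simp: sphere_recip_def norm_inverse inverse_le_1_iff)
  have "uniform_limit K (\<lambda>k z. inverse (F k z)) h sequentially"
  proof (rule uniform_limitI)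
    fix e :: real assume "e > 0"
    with conv have "\<forall>\<^sub>F k in sequentially. \<forall>z\<in>K. chordal (Some (F k z)) (g z) < e"
      unfolding sph_unif_conv_on_def by blast
    then show "\<forall>\<^sub>F k in sequentially. \<forall>z\<in>K. dist (inverse (F k z)) (h z) < e"
    proof (rule eventually_mono, intro ballI)
      fix k z assume close: "\<forall>z\<in>K. chordal (Some (F k z)) (g z) < e" and "z \<in> K"
      have "dist (inverse (F k z)) (h z) \<le> chordal (Some (inverse (F k z))) (Some (h z))"
        using F(2) h(2) \<open>z \<in> K\<close> by (intro dist_le_chordal)
      also have "\<dots> = chordal (Some (F k z)) (g z)"
        using F(1) h(1) \<open>z \<in> K\<close> by (simp add: chordal_sphere_recip)
      finally show "dist (inverse (F k z)) (h z) < e"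
        using close \<open>z \<in> K\<close> by fastforce
    qed
  qed
  then show ?thesis
    unfolding h_def .
qed

text \<open>Hurwitz's theorem for the reciprocals: 1/F_k are zero-free and converge to a
  holomorphic function vanishing at z0, so they converge to 0 throughout the ball.\<close>

lemma sph_unif_limit_infinity_on_ball:
  assumes "0 < \<rho>" and hol: "\<And>k. F k holomorphic_on cball z0 \<rho>"
    and F_large: "\<And>k z. z \<in> cball z0 \<rho> \<Longrightarrow> 1 \<le> cmod (F k z)"
    and g_large: "\<And>z b. z \<in> cball z0 \<rho> \<Longrightarrow> g z = Some b \<Longrightarrow> 1 \<le> cmod b"
    and conv: "sph_unif_conv_on F g (cball z0 \<rho>)" and "g z0 = None"
  shows "\<forall>z\<in>ball z0 \<rho>. g z = None"
proof -
  define H where "H k z = inverse (F k z)" for k z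
  define h where "h = (\<lambda>z. case g z of None \<Rightarrow> 0 | Some b \<Rightarrow> inverse b)"
  have H_lim: "uniform_limit (cball z0 \<rho>) H h sequentially"
    unfolding H_def h_def using conv F_large g_large by (rule uniform_limit_inverse_if_sph_unif_conv)
  have H_nz: "H k z \<noteq> 0" if "z \<in> cball z0 \<rho>" for k z
    using F_large[OF that, of k] unfolding H_def by auto
  have H_hol: "H k holomorphic_on cball z0 \<rho>" for k
    using H_nz hol unfolding H_def by (intro holomorphic_intros) (auto simp: H_def)
  obtain h_hol: "h holomorphic_on ball z0 \<rho>"
  proof (rule holomorphic_uniform_limit[where f = H and z = z0 and r = \<rho> and F = sequentially and g = h])
    show "\<forall>\<^sub>F k in sequentially.
        continuous_on (cball z0 \<rho>) (H k) \<and> H k holomorphic_on ball z0 \<rho>"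
      using H_hol by (simp add: holomorphic_on_imp_continuous_on holomorphic_on_subset[OF _ ball_subset_cball])
  qed (use H_lim in auto)
  have "h z0 = 0"
    using \<open>g z0 = None\<close> by (simp add: h_def)
  have "h constant_on ball z0 \<rho>"
  proof (rule ccontr)
    assume "\<not> h constant_on ball z0 \<rho>"
    then have "h z0 \<noteq> 0"
    proof (rule Hurwitz_no_zeros[of "ball z0 \<rho>" H h, rotated -3])
      show "H k holomorphic_on ball z0 \<rho>" for k
        using H_hol by (rule holomorphic_on_subset[OF _ ball_subset_cball])
      show "uniform_limit K H h sequentially" if "K \<subseteq> ball z0 \<rho>" for K
        using uniform_limit_on_subset[OF H_lim] that ball_subset_cball by blast
    qed (use \<open>0 < \<rho>\<close> h_hol H_nz in auto)
    with \<open>h z0 = 0\<close> show False by contradiction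
  qed
  then have h0: "h z = 0" if "z \<in> ball z0 \<rho>" for z
    using that \<open>h z0 = 0\<close> \<open>0 < \<rho>\<close> unfolding constant_on_def by (metis centre_in_ball)
  have "g z = None" if "z \<in> ball z0 \<rho>" for z
  proof (cases "g z")
    case (Some b)
    then have "inverse b = 0"
      using h0[OF that] by (simp add: h_def)
    moreover have "1 \<le> cmod b"
      using g_large[of z b] that Some by auto
    ultimately show ?thesis by simp
  qed
  then show ?thesis by blast
qed

lemma sph_loc_unif_limit_infinity_nhd:
  assumes U: "open U" and hol: "\<And>k. F k holomorphic_on U"
    and conv: "sph_loc_unif_conv_on F g U" and z0: "z0 \<in> U" "g z0 = None"
  shows "\<exists>\<rho>>0. \<forall>z\<in>ball z0 \<rho>. g z = None"
proof -
  have "continuous_on U (\<lambda>z. stereo (g z))"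
    using continuous_on_sph_loc_unif_limit[OF U _ conv] hol holomorphic_on_imp_continuous_on by blast
  then obtain \<delta> where "\<delta> > 0"
    and \<delta>: "\<And>z. z \<in> U \<Longrightarrow> dist z z0 < \<delta> \<Longrightarrow> chordal (g z) None < 1/2"
    using z0 unfolding continuous_on_iff chordal_eq_dist_stereo
    by (metis zero_less_divide_1_iff zero_less_numeral)
  obtain \<rho>0 where "\<rho>0 > 0" "cball z0 \<rho>0 \<subseteq> U"
    using U z0(1) open_contains_cball by blast
  define \<rho> where "\<rho> = min \<rho>0 (\<delta> / 2)"
  have "\<rho> > 0" and C: "cball z0 \<rho> \<subseteq> U"
    using \<open>\<rho>0 > 0\<close> \<open>\<delta> > 0\<close> \<open>cball z0 \<rho>0 \<subseteq> U\<close> by (auto simp: \<rho>_def)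
  have near_infinity: "chordal (g z) None < 1/2" if "z \<in> cball z0 \<rho>" for z
    using \<delta> C \<open>\<delta> > 0\<close> that by (auto simp: \<rho>_def dist_commute)
  have convC: "sph_unif_conv_on F g (cball z0 \<rho>)"
    using conv C by (rule sph_loc_unif_conv_onD[OF _ compact_cball])
  then obtain k0
    where k0: "\<And>k z. k \<ge> k0 \<Longrightarrow> z \<in> cball z0 \<rho> \<Longrightarrow> chordal (Some (F k z)) (g z) < 1/2"
    unfolding sph_unif_conv_on_def eventually_sequentially
    by (metis zero_less_divide_1_iff zero_less_numeral)
  have "\<forall>z\<in>ball z0 \<rho>. g z = None"
  proof (rule sph_unif_limit_infinity_on_ball[OF \<open>\<rho> > 0\<close> _ _ _
        sph_unif_conv_on_shift[OF convC] z0(2)])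
    show "F (k + k0) holomorphic_on cball z0 \<rho>" for k
      using hol C by (rule holomorphic_on_subset)
    show "1 \<le> cmod (F (k + k0) z)" if "z \<in> cball z0 \<rho>" for k z
    proof (rule less_imp_le, rule one_less_cmod_if_chordal_None_less_1)
      show "chordal (Some (F (k + k0) z)) None < 1"
        using chordal_triangle[of "Some (F (k + k0) z)" None "g z"] k0[OF _ that, of "k + k0"]
          near_infinity[OF that]
        by linarith
    qed
    show "1 \<le> cmod b" if "z \<in> cball z0 \<rho>" "g z = Some b" for z b
    proof (rule less_imp_le, rule one_less_cmod_if_chordal_None_less_1)
      show "chordal (Some b) None < 1"
        using near_infinity[OF that(1)] that(2) by simp
    qed
  qed
  with \<open>\<rho> > 0\<close> show ?thesis by blast
qed

lemma sph_loc_unif_limit_dichotomy: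
  assumes U: "open U" "connected U" and hol: "\<And>k. F k holomorphic_on U"
    and conv: "sph_loc_unif_conv_on F g U"
  shows "(\<forall>z\<in>U. g z = None) \<or> (\<forall>z\<in>U. g z \<noteq> None)"
proof -
  define A where "A = {z \<in> U. g z = None}"
  define B where "B = U \<inter> (\<lambda>z. stereo (g z)) -` (- {stereo None})"
  have "open A"
    unfolding open_contains_ball
  proof
    fix z assume "z \<in> A"
    then obtain \<rho> where "\<rho> > 0" "\<forall>w\<in>ball z \<rho>. g w = None"
      using sph_loc_unif_limit_infinity_nhd[OF U(1) hol conv] unfolding A_def by blast
    moreover obtain \<rho>' where "\<rho>' > 0" "ball z \<rho>' \<subseteq> U"
      using U(1) \<open>z \<in> A\<close> unfolding A_def open_contains_ball by blast
    ultimately show "\<exists>e>0. ball z e \<subseteq> A"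
      by (intro exI[of _ "min \<rho> \<rho>'"]) (auto simp: A_def)
  qed
  moreover have "open B"
    unfolding B_def using continuous_on_sph_loc_unif_limit[OF U(1) _ conv] hol U(1)
    by (intro continuous_open_preimage) (auto intro: holomorphic_on_imp_continuous_on)
  moreover have "A \<inter> B \<inter> U = {}" "U \<subseteq> A \<union> B"
    by (auto simp: A_def B_def stereo_eq_stereo_None_iff)
  ultimately have "A \<inter> U = {} \<or> B \<inter> U = {}"
    using connectedD[OF U(2)] by blast
  then show ?thesis
    by (auto simp: A_def B_def stereo_eq_stereo_None_iff)
qed

section \<open>Rescalings of a transcendental entire function\<close>

lemma entire_affine_if_linear_bound_on_circles:
  fixes f :: "complex \<Rightarrow> complex" and R :: "nat \<Rightarrow> real"
  assumes holf: "f holomorphic_on UNIV" and R: "filterlim R at_top sequentially"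
    and bound: "\<forall>\<^sub>F k in sequentially. \<forall>z. cmod z = R k \<longrightarrow> cmod (f z) \<le> C * R k"
  shows "f z = f 0 + deriv f 0 * z"
proof -
  have higher: "(deriv ^^ j) f 0 = 0" if "2 \<le> j" for j
  proof -
    have "\<forall>\<^sub>F k in sequentially. cmod ((deriv ^^ j) f 0) \<le> fact j * C / R k ^ (j - 1)"
      using bound R[unfolded filterlim_at_top_dense, rule_format, of 0]
    proof eventually_elim
      case (elim k)
      have "cmod ((deriv ^^ j) f 0) \<le> fact j * (C * R k) / R k ^ j"
        using elim holf
        by (intro Cauchy_inequality) (auto intro: holomorphic_on_subset holomorphic_on_imp_continuous_on)
      also have "\<dots> = fact j * C / R k ^ (j - 1)"
        using \<open>2 \<le> j\<close> elim(2) by (simp add: power_eq_if)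
      finally show ?case .
    qed
    moreover have "(\<lambda>k. fact j * C / R k ^ (j - 1)) \<longlonglongrightarrow> 0"
      using \<open>2 \<le> j\<close>
      by (intro tendsto_divide_0[OF tendsto_const] filterlim_at_top_imp_at_infinity filterlim_pow_at_top R)
        auto
    ultimately have "cmod ((deriv ^^ j) f 0) \<le> 0"
      by (intro tendsto_lowerbound) (auto simp: eventually_mono)
    then show ?thesis by simp
  qed
  have "(\<lambda>j. (deriv ^^ j) f 0 / fact j * (z - 0) ^ j) sums f z"
    using holf by (intro holomorphic_power_series[where r = "cmod z + 1"]) (auto intro: holomorphic_on_subset)
  moreover have "(\<lambda>j. (deriv ^^ j) f 0 / fact j * z ^ j)
      sums (\<Sum>j\<in>{0, 1}. (deriv ^^ j) f 0 / fact j * z ^ j)"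
    by (rule sums_finite) (auto simp: higher)
  ultimately show ?thesis
    by (simp add: sums_unique2)
qed

lemma holomorphic_rescale:
  assumes "f holomorphic_on UNIV"
  shows "rescale f n holomorphic_on UNIV"
proof -
  have "(f \<circ> (\<lambda>z. of_nat n * z)) holomorphic_on UNIV"
    by (rule holomorphic_on_compose[OF _ holomorphic_on_subset[OF assms subset_UNIV]])
      (intro holomorphic_intros)
  then show ?thesis
    unfolding rescale_def o_def by (intro holomorphic_intros) auto
qed

lemma rescale_bounded_on_circle_imp_affine:
  fixes f :: "complex \<Rightarrow> complex" and r :: "nat \<Rightarrow> nat"
  assumes holf: "f holomorphic_on UNIV" and r: "filterlim r at_top sequentially" and "t > 0"
    and bound: "\<forall>\<^sub>F k in sequentially. \<forall>z\<in>sphere 0 t. cmod (rescale f (r k) z) \<le> M"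
  shows "f z = f 0 + deriv f 0 * z"
proof (rule entire_affine_if_linear_bound_on_circles[OF holf])
  show "filterlim (\<lambda>k. real (r k) * t) at_top sequentially"
    using \<open>t > 0\<close> filterlim_compose[OF filterlim_real_sequentially r]
    by (intro filterlim_at_top_mult_tendsto_pos[OF tendsto_const])
  show "\<forall>\<^sub>F k in sequentially.
      \<forall>w. cmod w = real (r k) * t \<longrightarrow> cmod (f w) \<le> M / t * (real (r k) * t)"
    using bound eventually_gt_at_top[THEN filterlim_iff[THEN iffD1, OF r, rule_format], of 0]
  proof eventually_elim
    case (elim k)
    show ?case
    proof (intro allI impI)
      fix w assume w: "cmod w = real (r k) * t"
      define z where "z = w / of_nat (r k)"
      have "w = of_nat (r k) * z" "z \<in> sphere 0 t"
        using w elim(2) by (auto simp: z_def norm_divide)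
      then have "cmod (f w) / real (r k) \<le> M"
        using elim(1) by (auto simp: rescale_def norm_divide)
      then show "cmod (f w) \<le> M / t * (real (r k) * t)"
        using \<open>t > 0\<close> elim(2) by (simp add: field_simps)
    qed
  qed
qed

lemma rescale_sph_limit_on_circle_hits_infinity:
  assumes f: "transcendental_entire f" and r: "filterlim r at_top sequentially" and "0 < t"
    and conv: "sph_unif_conv_on (\<lambda>k. rescale f (r k)) g (sphere 0 t)"
  shows "\<exists>z\<in>sphere 0 t. g z = None"
proof (rule ccontr)
  have holf: "f holomorphic_on UNIV"
    using f by (simp add: transcendental_entire_def)
  have cont: "continuous_on (sphere 0 t) (rescale f (r k))" for k
    using holomorphic_on_imp_continuous_on[OF holomorphic_rescale[OF holf]]
    by (rule continuous_on_subset) simp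
  assume "\<not> ?thesis"
  then have "g z \<noteq> None" if "z \<in> sphere 0 t" for z
    using that by meson
  then obtain M
    where bound: "\<forall>\<^sub>F k in sequentially. \<forall>z\<in>sphere 0 t. cmod (rescale f (r k) z) \<le> M"
    using sph_unif_conv_on_finite_limit_bounded[OF compact_sphere cont conv] by blast
  have "f z = poly [:f 0, deriv f 0:] z" for z
    using rescale_bounded_on_circle_imp_affine[OF holf r \<open>0 < t\<close> bound, of z] by (simp add: mult.commute)
  then show False
    using f unfolding transcendental_entire_def by blast
qed

lemma tendsto_rescale_at_0:
  assumes "filterlim r at_top sequentially"
  shows "(\<lambda>k. rescale f (r k) 0) \<longlonglongrightarrow> 0"
proof -
  have "(\<lambda>k. inverse (real (r k))) \<longlonglongrightarrow> 0"
    by (rule tendsto_inverse_0_at_top[OF filterlim_compose[OF filterlim_real_sequentially assms]])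
  then have "(\<lambda>k. f 0 * of_real (inverse (real (r k)))) \<longlonglongrightarrow> f 0 * of_real 0"
    by (intro tendsto_intros)
  then show ?thesis
    by (simp add: rescale_def divide_inverse)
qed

lemma rescale_sph_limit_at_0:
  assumes r: "filterlim r at_top sequentially"
    and conv: "sph_unif_conv_on (\<lambda>k. rescale f (r k)) g {0}"
  shows "g 0 = Some 0"
proof -
  have "(\<lambda>k. stereo (Some (rescale f (r k) 0))) \<longlonglongrightarrow> stereo (g 0)"
    using conv unfolding sph_unif_conv_on_iff_uniform_limit by (rule tendsto_uniform_limitI) simp
  moreover have "isCont (\<lambda>z. stereo (Some z)) 0"
    using continuous_on_stereo_Some[of UNIV "\<lambda>z. z"] by (simp add: continuous_on_eq_continuous_at)
  then have "(\<lambda>k. stereo (Some (rescale f (r k) 0))) \<longlonglongrightarrow> stereo (Some 0)"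
    using isCont_tendsto_compose tendsto_rescale_at_0[OF r] by blast
  ultimately have "chordal (g 0) (Some 0) = 0"
    unfolding chordal_eq_dist_stereo using LIMSEQ_unique by simp
  then show ?thesis
    using one_add_cmod_sq_pos[of "the (g 0)"] by (cases "g 0") (auto simp: chordal_def)
qed

lemma rescale_no_sph_limit_near_0:
  assumes f: "transcendental_entire f" and r: "filterlim r at_top sequentially" and "0 < \<rho>"
  shows "\<not> sph_loc_unif_conv_on (\<lambda>k. rescale f (r k)) g (ball 0 \<rho>)"
proof
  assume conv: "sph_loc_unif_conv_on (\<lambda>k. rescale f (r k)) g (ball 0 \<rho>)"
  have "f holomorphic_on UNIV"
    using f by (simp add: transcendental_entire_def)
  then have "continuous_on S (rescale f (r k))" for S k
    using continuous_on_subset[OF holomorphic_on_imp_continuous_on[OF holomorphic_rescale] subset_UNIV]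
    by blast
  then have "continuous_on (ball 0 \<rho>) (\<lambda>z. stereo (g z))"
    by (rule continuous_on_sph_loc_unif_limit[OF open_ball _ conv])
  moreover have "g 0 = Some 0"
    using \<open>0 < \<rho>\<close>
    by (intro rescale_sph_limit_at_0[OF r, where f = f] sph_loc_unif_conv_onD[OF conv]) auto
  ultimately obtain \<delta> where "\<delta> > 0"
    and \<delta>: "\<And>z. z \<in> ball 0 \<rho> \<Longrightarrow> dist z 0 < \<delta> \<Longrightarrow> chordal (g z) (Some 0) < 2"
    using \<open>0 < \<rho>\<close> unfolding continuous_on_iff chordal_eq_dist_stereo
    by (metis centre_in_ball zero_less_numeral)
  define t where "t = min \<delta> \<rho> / 2"
  have "0 < t" and circle: "sphere 0 t \<subseteq> ball 0 \<rho>"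
    using \<open>\<delta> > 0\<close> \<open>0 < \<rho>\<close> by (auto simp: t_def)
  with conv have "sph_unif_conv_on (\<lambda>k. rescale f (r k)) g (sphere 0 t)"
    by (blast intro: sph_loc_unif_conv_onD compact_sphere)
  then obtain z where z: "z \<in> sphere 0 t" "g z = None"
    using rescale_sph_limit_on_circle_hits_infinity[OF f r \<open>0 < t\<close>] by blast
  have "chordal (g z) (Some 0) < 2"
  proof (rule \<delta>)
    show "z \<in> ball 0 \<rho>"
      using z(1) circle by blast
    show "dist z 0 < \<delta>"
      using z(1) \<open>\<delta> > 0\<close> by (auto simp: t_def)
  qed
  then show False
    using z(2) by (simp add: chordal_def)
qed

lemma rescale_sph_limit_on_punctured_disc:
  assumes f: "transcendental_entire f" and r: "filterlim r at_top sequentially" and "0 < s"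
    and conv: "sph_loc_unif_conv_on (\<lambda>k. rescale f (r k)) g (ball 0 s - {0})"
  shows "\<forall>z\<in>ball 0 s - {0}. g z = None"
proof -
  have holf: "f holomorphic_on UNIV"
    using f by (simp add: transcendental_entire_def)
  have hol: "rescale f (r k) holomorphic_on ball 0 s - {0}" for k
    using holomorphic_on_subset[OF holomorphic_rescale[OF holf] subset_UNIV] .
  have "open (ball (0::complex) s - {0})"
    by (simp add: open_Diff)
  moreover have "connected (ball (0::complex) s - {0})"
    by (rule connected_punctured_ball) simp
  ultimately have "(\<forall>z\<in>ball 0 s - {0}. g z = None) \<or> (\<forall>z\<in>ball 0 s - {0}. g z \<noteq> None)"
    by (rule sph_loc_unif_limit_dichotomy[OF _ _ hol conv])
  moreover have circle: "sphere 0 (s / 2) \<subseteq> ball 0 s - {0}"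
    using \<open>0 < s\<close> by auto
  with conv have "sph_unif_conv_on (\<lambda>k. rescale f (r k)) g (sphere 0 (s / 2))"
    by (blast intro: sph_loc_unif_conv_onD compact_sphere)
  then obtain z where "z \<in> sphere 0 (s / 2)" "g z = None"
    using rescale_sph_limit_on_circle_hits_infinity[OF f r half_gt_zero[OF \<open>0 < s\<close>]] by blast
  moreover from this(1) circle have "z \<in> ball 0 s - {0}"
    by blast
  ultimately show ?thesis
    by meson
qed

theorem mainTheorem6:
  fixes f :: "complex \<Rightarrow> complex" and r :: "nat \<Rightarrow> nat" and Q :: "complex set"
  assumes "transcendental_entire f"
    and "strict_mono r" and "\<forall>k. r k > 0"
    and "finite Q"
    and "\<exists>g. sph_loc_unif_conv_on (\<lambda>k. rescale f (r k)) g (UNIV - Q)"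
  shows "0 \<in> Q \<and>
    (\<exists>s. 0 < s \<and> s < 1 \<and>
       sph_loc_unif_conv_on (\<lambda>k. rescale f (r k)) (\<lambda>_. None) (ball 0 s - {0}))"
proof -
  have r: "filterlim r at_top sequentially"
    using filterlim_subseq[OF assms(2)] .
  obtain g where conv: "sph_loc_unif_conv_on (\<lambda>k. rescale f (r k)) g (UNIV - Q)"
    using assms(5) by blast
  have "0 \<in> Q"
  proof (rule ccontr)
    assume "0 \<notin> Q"
    moreover have "open (UNIV - Q)"
      using assms(4) by (simp add: open_Diff finite_imp_closed)
    ultimately obtain \<rho> where "0 < \<rho>" "ball 0 \<rho> \<subseteq> UNIV - Q"
      by (meson DiffI UNIV_I open_contains_ball)
    then show False
      using rescale_no_sph_limit_near_0[OF assms(1) r] sph_loc_unif_conv_on_subset[OF conv] by blast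
  qed
  obtain e where "0 < e" and e: "\<forall>w\<in>ball 0 e. w \<noteq> 0 \<longrightarrow> w \<notin> Q"
    using finite_ball_avoid[OF open_UNIV assms(4), of 0] by blast
  define s where "s = min e (1 / 2)"
  have "0 < s" "s < 1" "ball 0 s - {0} \<subseteq> UNIV - Q"
    using \<open>0 < e\<close> e by (auto simp: s_def)
  then have conv_s: "sph_loc_unif_conv_on (\<lambda>k. rescale f (r k)) g (ball 0 s - {0})"
    using sph_loc_unif_conv_on_subset[OF conv] by blast
  have "\<forall>z\<in>ball 0 s - {0}. g z = None"
    using rescale_sph_limit_on_punctured_disc[OF assms(1) r \<open>0 < s\<close> conv_s] .
  then have "sph_loc_unif_conv_on (\<lambda>k. rescale f (r k)) (\<lambda>_. None) (ball 0 s - {0})"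
    by (intro sph_loc_unif_conv_on_cong[OF conv_s]) simp
  with \<open>0 \<in> Q\<close> \<open>0 < s\<close> \<open>s < 1\<close> show ?thesis
    by blast
qed

end
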